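(* Define $${\cal D}_0:=\{\mu\in{\cal S}:{\cal F}^n(\mu)\Rightarrow\delta_{\underline0}\text{ as }n\to\infty\},\qquad \widehat{\cal D}_0:=\{\mu\in{\cal S}:\widehat{\cal F}^n(\mu)\Rightarrow\delta_{\underline0}\text{ as }n\to\infty\}.$$ Then ${\cal D}_0$ and $\widehat{\cal D}_0$ are open, dense subsets of ${\cal S}$.
   Context: **Spaces.** $S=\{0,1\}^{\mathbb N}$ with $\mathbb N=\{0,1,\dots\}$, equipped with the product topology. ${\cal M}$ is the set of Borel probability laws on $S$ with the topology of weak convergence (denoted $\Rightarrow$). ${\cal S}\subset{\cal M}$ is the set of shift-invariant (stationary) laws, with the relative topology. $\underline0\in S$ is the all-zero configuration and $\delta_{\underline0}$ the point mass on it. **Column maps.** $\Phi_{\rm A}(y,z)(k)=y(k)\wedge z(k)$ and $\Phi_{\rm b}(y)(k)=y(k)\vee y(k+1)$. For $\mu\in{\cal M}$, ${\cal F}_{\rm A}(\mu)$ is the law of $\Phi_{\rm A}(Y,Z)$ and ${\cal F}_{\rm b}(\mu)$ is the law of $\Phi_{\rm b}(Y)$, where $Y,Z$ are independent with law $\mu$. ${\cal F}={\cal F}_{\rm A}\circ{\cal F}_{\rm b}$, $\widehat{\cal F}={\cal F}_{\rm b}\circ{\cal F}_{\rm A}$, and ${\cal F}^n$ and $\widehat{\cal F}^n$ denote $n$-fold iterates. *)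

theory Defs
  imports "HOL-Probability.Probability"
begin

text \<open>Configuration space S = {0,1}^N, encoded as nat => bool with the product
topology (Function_Topology instance; bool carries the discrete topology).
Laws are Borel probability measures on it.\<close>

type_synonym config = "nat \<Rightarrow> bool"

definition laws :: "config measure set" where
  "laws = {\<mu>. sets \<mu> = sets (borel :: config measure) \<and> prob_space \<mu>}"

definition shift :: "config \<Rightarrow> config" where
  "shift y = (\<lambda>k. y (Suc k))"

definition stationary_laws :: "config measure set" where
  "stationary_laws = {\<mu> \<in> laws. distr \<mu> borel shift = \<mu>}"

definition bdd_cont :: "(config \<Rightarrow> real) \<Rightarrow> bool" where
  "bdd_cont f \<longleftrightarrow> continuous_on UNIV f \<and> bounded (range f)"

definition weak_conv :: "(nat \<Rightarrow> config measure) \<Rightarrow> config measure \<Rightarrow> bool" where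
  "weak_conv \<mu>s \<mu> \<longleftrightarrow>
     (\<forall>f. bdd_cont f \<longrightarrow> (\<lambda>n. \<integral>x. f x \<partial>(\<mu>s n)) \<longlonglongrightarrow> (\<integral>x. f x \<partial>\<mu>))"

definition weak_topology :: "config measure topology" where
  "weak_topology = topology_generated_by
     {{\<mu> \<in> laws. (\<integral>x. f x \<partial>\<mu>) \<in> U} | f U. bdd_cont f \<and> open U}"

definition Phi_A :: "config \<Rightarrow> config \<Rightarrow> config" where
  "Phi_A y z = (\<lambda>k. y k \<and> z k)"

definition Phi_b :: "config \<Rightarrow> config" where
  "Phi_b y = (\<lambda>k. y k \<or> y (Suc k))"

definition F_A :: "config measure \<Rightarrow> config measure" where
  "F_A \<mu> = distr (\<mu> \<Otimes>\<^sub>M \<mu>) borel (\<lambda>(y, z). Phi_A y z)"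

definition F_b :: "config measure \<Rightarrow> config measure" where
  "F_b \<mu> = distr \<mu> borel Phi_b"

definition F :: "config measure \<Rightarrow> config measure" where
  "F = F_A \<circ> F_b"

definition F_hat :: "config measure \<Rightarrow> config measure" where
  "F_hat = F_b \<circ> F_A"

definition delta0 :: "config measure" where
  "delta0 = return borel (\<lambda>_. False)"

definition D0 :: "config measure set" where
  "D0 = {\<mu> \<in> stationary_laws. weak_conv (\<lambda>n. (F ^^ n) \<mu>) delta0}"

definition D0_hat :: "config measure set" where
  "D0_hat = {\<mu> \<in> stationary_laws. weak_conv (\<lambda>n. (F_hat ^^ n) \<mu>) delta0}"

end

theory Submission
  imports Defs
begin

text \<open>
  For a stationary law the probability \<open>r\<close> of a one at a site does not depend on the site.
  The map \<open>F_b\<close> at most doubles one-site probabilities and \<open>F_A\<close> squares them, so under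
  \<open>F\<close> and \<open>F_hat\<close> a uniform bound \<open>s\<close> becomes \<open>4 s\<^sup>2\<close>: once an iterate has \<open>r < 1/4\<close>
  the one-site probabilities decay geometrically, which forces weak convergence to \<open>\<delta>\<^sub>0\<close>;
  conversely weak convergence to \<open>\<delta>\<^sub>0\<close> pushes \<open>r\<close> below \<open>1/4\<close>. Hence \<open>D\<^sub>0\<close> is the union
  over \<open>n\<close> of the sets where the \<open>n\<close>-th iterate gives the cylinder \<open>{y. y 0}\<close> probability
  below \<open>1/4\<close>; these are open because cylinder probabilities of \<open>F \<mu>\<close> are polynomials in
  cylinder probabilities of \<open>\<mu>\<close>.

  For density, the mixture \<open>p \<mu> + (1 - p) \<delta>\<^sub>0\<close> of a stationary \<open>\<mu>\<close> is stationary and gives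
  probability at most \<open>p\<close> to the nonzero configurations; both maps at least square this
  probability, so for \<open>p < 1\<close> the mixture lies in \<open>D\<^sub>0\<close>, and it tends to \<open>\<mu>\<close> as \<open>p \<rightarrow> 1\<close>.
\<close>

text \<open>Needed for the Borel sets of \<^typ>\<open>config\<close> to be generated by the coordinates.\<close>

instance bool :: second_countable_topology
proof
  have "open = generate_topology (UNIV :: bool set set)"
    by (auto simp: fun_eq_iff discrete_topology_class.open_discrete intro: generate_topology.Basis)
  then show "\<exists>B::bool set set. countable B \<and> open = generate_topology B"
    by auto
qed

abbreviation zero_config :: config where
  "zero_config \<equiv> \<lambda>_. False"

lemma measurable_coordinate [measurable]:
  "(\<lambda>y::config. y k) \<in> measurable borel (count_space UNIV)"
proof -
  have "(\<lambda>y::config. y k) \<in> borel_measurable borel"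
    by (intro borel_measurable_continuous_onI) simp
  then show ?thesis
    using measurable_cong_sets sets_borel_eq_count_space by blast
qed

lemma pred_coordinate [measurable]: "Measurable.pred borel (\<lambda>y::config. y k)"
  using measurable_coordinate by (simp add: pred_def measurable_count_space_eq2)

lemma sets_coordinate [measurable]: "{y::config. y k} \<in> sets borel"
  using pred_coordinate by (simp add: pred_def)

lemma borel_measurable_configI:
  assumes "\<And>k. Measurable.pred M (\<lambda>x. f x k)"
  shows "(f :: _ \<Rightarrow> config) \<in> borel_measurable M"
proof (rule measurable_coordinatewise_then_product)
  fix k
  have "(\<lambda>x. f x k) \<in> measurable M (count_space UNIV)"
    using assms[of k] by measurable
  then show "(\<lambda>x. f x k) \<in> borel_measurable M"
    by (simp add: measurable_cong_sets[OF refl sets_borel_eq_count_space])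
qed

lemma shift_measurable [measurable]: "shift \<in> borel_measurable borel"
  by (rule borel_measurable_configI) (simp add: shift_def)

lemma Phi_b_measurable [measurable]: "Phi_b \<in> borel_measurable borel"
  by (rule borel_measurable_configI) (simp add: Phi_b_def)

lemma Phi_A_measurable [measurable]:
  "(\<lambda>(y, z). Phi_A y z) \<in> borel_measurable (borel \<Otimes>\<^sub>M borel)"
  by (rule borel_measurable_configI) (simp add: Phi_A_def case_prod_beta)

lemma
  assumes "\<mu> \<in> laws"
  shows sets_law: "sets \<mu> = sets borel"
    and prob_space_law: "prob_space \<mu>"
    and space_law: "space \<mu> = UNIV"
  using assms unfolding laws_def by (auto dest: sets_eq_imp_space_eq)

lemma stationary_lawD: "\<mu> \<in> stationary_laws \<Longrightarrow> \<mu> \<in> laws"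
  by (simp add: stationary_laws_def)

lemma measurable_law_eq: "\<mu> \<in> laws \<Longrightarrow> measurable \<mu> N = measurable borel N"
  by (intro measurable_cong_sets) (auto simp: sets_law)

lemma measurable_pair_law_eq:
  "\<mu> \<in> laws \<Longrightarrow> measurable (M \<Otimes>\<^sub>M \<mu>) N = measurable (M \<Otimes>\<^sub>M borel) N"
  by (intro measurable_cong_sets sets_pair_measure_cong) (auto simp: sets_law)

lemma measurable_law_pair_eq:
  "\<mu> \<in> laws \<Longrightarrow> measurable (\<mu> \<Otimes>\<^sub>M M) N = measurable (borel \<Otimes>\<^sub>M M) N"
  by (intro measurable_cong_sets sets_pair_measure_cong) (auto simp: sets_law)

lemma measure_pair_measure_Times:
  assumes "finite_measure M" "finite_measure N" "A \<in> sets M" "B \<in> sets N"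
  shows "measure (M \<Otimes>\<^sub>M N) (A \<times> B) = measure M A * measure N B"
proof -
  interpret N: finite_measure N by fact
  show ?thesis
    using assms by (simp add: measure_def N.emeasure_pair_measure_Times enn2real_mult)
qed

lemma distr_law:
  assumes "prob_space M" "g \<in> measurable M borel"
  shows "distr M borel g \<in> laws"
  using prob_space.prob_space_distr[OF assms] by (simp add: laws_def)

lemma F_b_law: "\<mu> \<in> laws \<Longrightarrow> F_b \<mu> \<in> laws"
  unfolding F_b_def by (rule distr_law) (auto simp: prob_space_law measurable_law_eq)

lemma F_A_law: "\<mu> \<in> laws \<Longrightarrow> F_A \<mu> \<in> laws"
  unfolding F_A_def
  by (rule distr_law) (auto intro: prob_space_pair prob_space_law
      simp: measurable_pair_law_eq measurable_law_pair_eq)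

lemma stationary_law_shift_invariant:
  assumes "\<mu> \<in> stationary_laws"
  shows "distr \<mu> \<mu> shift = \<mu>"
proof -
  have "distr \<mu> \<mu> shift = distr \<mu> borel shift"
    using assms by (intro distr_cong) (auto simp: stationary_laws_def sets_law)
  then show ?thesis
    using assms by (simp add: stationary_laws_def)
qed

lemma distr_stationary:
  assumes M: "prob_space M" and g: "g \<in> measurable M borel" and h: "h \<in> measurable M M"
    and invariant: "distr M M h = M" and commute: "\<And>x. x \<in> space M \<Longrightarrow> shift (g x) = g (h x)"
  shows "distr M borel g \<in> stationary_laws"
proof -
  have "distr (distr M borel g) borel shift = distr M borel (shift \<circ> g)"
    using g by (simp add: distr_distr)
  also have "\<dots> = distr M borel (g \<circ> h)"
    using commute by (intro distr_cong) auto
  also have "\<dots> = distr (distr M M h) borel g"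
    using g h by (simp add: distr_distr)
  finally show ?thesis
    using invariant distr_law[OF M g] by (simp add: stationary_laws_def)
qed

lemma pair_measure_shift_invariant:
  assumes f: "f \<in> measurable M M" "distr M M f = M" and \<mu>: "\<mu> \<in> stationary_laws"
  shows "distr (M \<Otimes>\<^sub>M \<mu>) (M \<Otimes>\<^sub>M \<mu>) (\<lambda>(x, y). (f x, shift y)) = M \<Otimes>\<^sub>M \<mu>"
proof -
  note L = stationary_lawD[OF \<mu>]
  have "distr M M f \<Otimes>\<^sub>M distr \<mu> \<mu> shift = distr (M \<Otimes>\<^sub>M \<mu>) (M \<Otimes>\<^sub>M \<mu>) (\<lambda>(x, y). (f x, shift y))"
    using L stationary_law_shift_invariant[OF \<mu>] prob_space_law[OF L]
    by (intro pair_measure_distr f) (auto simp: measurable_cong_sets[OF sets_law sets_law]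
        prob_space_imp_sigma_finite)
  then show ?thesis
    using f(2) stationary_law_shift_invariant[OF \<mu>] by simp
qed

lemma F_b_stationary:
  assumes "\<mu> \<in> stationary_laws"
  shows "F_b \<mu> \<in> stationary_laws"
proof -
  note L = stationary_lawD[OF assms]
  show ?thesis
    unfolding F_b_def
  proof (rule distr_stationary[where h = shift])
    show "shift \<in> measurable \<mu> \<mu>"
      by (simp add: measurable_cong_sets[OF sets_law[OF L] sets_law[OF L]])
  qed (auto simp: prob_space_law[OF L] measurable_law_eq[OF L]
      stationary_law_shift_invariant[OF assms] shift_def Phi_b_def)
qed

lemma F_A_stationary:
  assumes "\<mu> \<in> stationary_laws"
  shows "F_A \<mu> \<in> stationary_laws"
proof -
  note L = stationary_lawD[OF assms]
  have sets: "sets (\<mu> \<Otimes>\<^sub>M \<mu>) = sets (borel \<Otimes>\<^sub>M borel)"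
    using L by (intro sets_pair_measure_cong) (auto simp: sets_law)
  show ?thesis
    unfolding F_A_def
  proof (rule distr_stationary[where h = "\<lambda>(x, y). (shift x, shift y)"])
    show "prob_space (\<mu> \<Otimes>\<^sub>M \<mu>)"
      by (intro prob_space_pair prob_space_law L)
    show "(\<lambda>(y, z). Phi_A y z) \<in> borel_measurable (\<mu> \<Otimes>\<^sub>M \<mu>)"
      by (simp add: measurable_cong_sets[OF sets refl])
    show "(\<lambda>(x, y). (shift x, shift y)) \<in> measurable (\<mu> \<Otimes>\<^sub>M \<mu>) (\<mu> \<Otimes>\<^sub>M \<mu>)"
      by (simp add: measurable_cong_sets[OF sets sets])
    show "distr (\<mu> \<Otimes>\<^sub>M \<mu>) (\<mu> \<Otimes>\<^sub>M \<mu>) (\<lambda>(x, y). (shift x, shift y)) = \<mu> \<Otimes>\<^sub>M \<mu>"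
      using L stationary_law_shift_invariant[OF assms]
      by (intro pair_measure_shift_invariant assms)
        (simp_all add: measurable_cong_sets[OF sets_law sets_law])
  qed (auto simp: shift_def Phi_A_def)
qed

lemma F_law: "\<mu> \<in> laws \<Longrightarrow> F \<mu> \<in> laws"
  and F_hat_law: "\<mu> \<in> laws \<Longrightarrow> F_hat \<mu> \<in> laws"
  and F_stationary: "\<mu> \<in> stationary_laws \<Longrightarrow> F \<mu> \<in> stationary_laws"
  and F_hat_stationary: "\<mu> \<in> stationary_laws \<Longrightarrow> F_hat \<mu> \<in> stationary_laws"
  by (simp_all add: F_def F_hat_def F_A_law F_b_law F_A_stationary F_b_stationary)

lemma measure_F_b:
  assumes "\<nu> \<in> laws" "A \<in> sets borel"
  shows "measure (F_b \<nu>) A = measure \<nu> (Phi_b -` A)"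
  using assms unfolding F_b_def
  by (subst measure_distr) (auto simp: measurable_law_eq space_law)

lemma measure_F_A:
  assumes "\<nu> \<in> laws" "A \<in> sets borel"
  shows "measure (F_A \<nu>) A = measure (\<nu> \<Otimes>\<^sub>M \<nu>) ((\<lambda>(y, z). Phi_A y z) -` A)"
  using assms unfolding F_A_def
  by (subst measure_distr)
    (auto simp: measurable_pair_law_eq measurable_law_pair_eq space_pair_measure space_law)

subsection \<open>Densities of ones\<close>

definition site_prob :: "config measure \<Rightarrow> nat \<Rightarrow> real" where
  "site_prob \<nu> k = measure \<nu> {y. y k}"

definition nonzero_prob :: "config measure \<Rightarrow> real" where
  "nonzero_prob \<nu> = measure \<nu> {y. \<exists>k. y k}"

lemma sets_nonzero [measurable]: "{y::config. \<exists>k. y k} \<in> sets borel"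
proof -
  have "Measurable.pred borel (\<lambda>y::config. \<exists>k. y k)"
    by measurable
  then show ?thesis
    by (simp add: pred_def)
qed

lemma site_prob_nonneg: "0 \<le> site_prob \<nu> k"
  by (simp add: site_prob_def)

lemma nonzero_prob_nonneg: "0 \<le> nonzero_prob \<nu>"
  by (simp add: nonzero_prob_def)

lemma site_prob_le_nonzero_prob:
  assumes "\<nu> \<in> laws"
  shows "site_prob \<nu> k \<le> nonzero_prob \<nu>"
proof -
  interpret prob_space \<nu>
    using assms by (rule prob_space_law)
  show ?thesis
    unfolding site_prob_def nonzero_prob_def
    by (rule finite_measure_mono) (auto simp: sets_law[OF assms])
qed

lemma site_prob_stationary:
  assumes "\<nu> \<in> stationary_laws"
  shows "site_prob \<nu> k = site_prob \<nu> 0"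
proof (induction k)
  case (Suc k)
  have L: "\<nu> \<in> laws" and invariant: "distr \<nu> borel shift = \<nu>"
    using assms by (auto simp: stationary_laws_def)
  have "site_prob \<nu> (Suc k) = measure \<nu> (shift -` {y. y k} \<inter> space \<nu>)"
    by (simp add: site_prob_def shift_def space_law[OF L])
  also have "\<dots> = measure (distr \<nu> borel shift) {y. y k}"
    by (rule measure_distr[symmetric]) (auto simp: measurable_law_eq[OF L])
  finally show ?case
    using Suc by (simp add: invariant site_prob_def)
qed simp

lemma site_prob_F_b_le:
  assumes "\<nu> \<in> laws"
  shows "site_prob (F_b \<nu>) k \<le> site_prob \<nu> k + site_prob \<nu> (Suc k)"
proof -
  have "site_prob (F_b \<nu>) k = measure \<nu> ({y. y k} \<union> {y. y (Suc k)})"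
    using assms by (simp add: site_prob_def measure_F_b vimage_def Phi_b_def Collect_disj_eq)
  also have "\<dots> \<le> site_prob \<nu> k + site_prob \<nu> (Suc k)"
    unfolding site_prob_def by (rule measure_Un_le) (auto simp: sets_law[OF assms])
  finally show ?thesis .
qed

lemma site_prob_F_A:
  assumes "\<nu> \<in> laws"
  shows "site_prob (F_A \<nu>) k = (site_prob \<nu> k)\<^sup>2"
proof -
  interpret prob_space \<nu>
    using assms by (rule prob_space_law)
  have "(\<lambda>(y, z). Phi_A y z) -` {y. y k} = {y. y k} \<times> {y. y k}"
    by (auto simp: Phi_A_def)
  then show ?thesis
    using assms by (simp add: site_prob_def measure_F_A measure_pair_measure_Times sets_law
        power2_eq_square)
qed

lemma nonzero_prob_F_b_le:
  assumes "\<nu> \<in> laws"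
  shows "nonzero_prob (F_b \<nu>) \<le> nonzero_prob \<nu>"
proof -
  interpret prob_space \<nu>
    using assms by (rule prob_space_law)
  show ?thesis
    unfolding nonzero_prob_def using assms
    by (simp add: measure_F_b) (rule finite_measure_mono, auto simp: Phi_b_def sets_law)
qed

lemma nonzero_prob_F_A_le:
  assumes "\<nu> \<in> laws"
  shows "nonzero_prob (F_A \<nu>) \<le> (nonzero_prob \<nu>)\<^sup>2"
proof -
  let ?N = "{y::config. \<exists>k. y k}"
  interpret prob_space \<nu>
    using assms by (rule prob_space_law)
  interpret P: prob_space "\<nu> \<Otimes>\<^sub>M \<nu>"
    by (intro prob_space_pair prob_space_axioms)
  have "nonzero_prob (F_A \<nu>) = measure (\<nu> \<Otimes>\<^sub>M \<nu>) ((\<lambda>(y, z). Phi_A y z) -` ?N)"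
    using assms by (simp add: nonzero_prob_def measure_F_A)
  also have "\<dots> \<le> measure (\<nu> \<Otimes>\<^sub>M \<nu>) (?N \<times> ?N)"
    by (rule P.finite_measure_mono) (auto simp: Phi_A_def sets_law[OF assms])
  also have "\<dots> = (nonzero_prob \<nu>)\<^sup>2"
    using assms by (simp add: nonzero_prob_def measure_pair_measure_Times sets_law
        power2_eq_square)
  finally show ?thesis .
qed

lemma site_prob_F_le:
  assumes "\<rho> \<in> laws" "\<And>k. site_prob \<rho> k \<le> s"
  shows "site_prob (F \<rho>) j \<le> 4 * s\<^sup>2"
proof -
  have "site_prob (F \<rho>) j = (site_prob (F_b \<rho>) j)\<^sup>2"
    using assms by (simp add: F_def site_prob_F_A F_b_law)
  also have "\<dots> \<le> (2 * s)\<^sup>2"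
    using site_prob_F_b_le[OF assms(1), of j] assms(2)[of j] assms(2)[of "Suc j"]
    by (intro power_mono site_prob_nonneg) linarith
  finally show ?thesis
    by (simp add: power_mult_distrib)
qed

lemma site_prob_F_hat_le:
  assumes "\<rho> \<in> laws" "\<And>k. site_prob \<rho> k \<le> s"
  shows "site_prob (F_hat \<rho>) j \<le> 4 * s\<^sup>2"
proof -
  have "site_prob (F_hat \<rho>) j \<le> (site_prob \<rho> j)\<^sup>2 + (site_prob \<rho> (Suc j))\<^sup>2"
    using site_prob_F_b_le[OF F_A_law[OF assms(1)], of j] assms(1)
    by (simp add: F_hat_def site_prob_F_A)
  also have "\<dots> \<le> s\<^sup>2 + s\<^sup>2"
    using assms(2) by (intro add_mono power_mono site_prob_nonneg)
  finally show ?thesis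
    using zero_le_power2[of s] by linarith
qed

lemma nonzero_prob_F_le: "\<rho> \<in> laws \<Longrightarrow> nonzero_prob (F \<rho>) \<le> (nonzero_prob \<rho>)\<^sup>2"
  using nonzero_prob_F_A_le[OF F_b_law] nonzero_prob_F_b_le
  by (simp add: F_def) (meson nonzero_prob_nonneg order_trans power_mono)

lemma nonzero_prob_F_hat_le: "\<rho> \<in> laws \<Longrightarrow> nonzero_prob (F_hat \<rho>) \<le> (nonzero_prob \<rho>)\<^sup>2"
  using nonzero_prob_F_b_le[OF F_A_law] nonzero_prob_F_A_le
  by (simp add: F_hat_def) (meson order_trans)

subsection \<open>Weak convergence to the all-zero configuration\<close>

lemma weak_convD:
  "weak_conv \<nu> \<mu> \<Longrightarrow> bdd_cont f \<Longrightarrow> (\<lambda>n. \<integral>x. f x \<partial>\<nu> n) \<longlonglongrightarrow> (\<integral>x. f x \<partial>\<mu>)"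
  by (simp add: weak_conv_def)

lemma bdd_cont_borel_measurable: "bdd_cont f \<Longrightarrow> f \<in> borel_measurable borel"
  by (simp add: bdd_cont_def borel_measurable_continuous_onI)

lemma bdd_cont_boundE:
  assumes "bdd_cont f"
  obtains B where "\<And>y. \<bar>f y\<bar> \<le> B"
proof -
  obtain B where "\<forall>x\<in>range f. norm x \<le> B"
    using assms by (auto simp: bdd_cont_def bounded_iff)
  then show thesis
    using that by auto
qed

lemma integrable_bdd_cont:
  assumes "bdd_cont f" "\<mu> \<in> laws"
  shows "integrable \<mu> f"
proof -
  interpret prob_space \<mu>
    using assms(2) by (rule prob_space_law)
  obtain B where "\<And>y. \<bar>f y\<bar> \<le> B"
    using bdd_cont_boundE[OF assms(1)] by blast
  then show ?thesis
    using assms by (intro integrable_const_bound[where B = B])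
      (auto simp: measurable_law_eq bdd_cont_borel_measurable)
qed

lemma integral_delta0: "bdd_cont f \<Longrightarrow> (\<integral>x. f x \<partial>delta0) = f zero_config"
  unfolding delta0_def by (rule integral_return) (auto simp: bdd_cont_borel_measurable)

lemma bdd_cont_coordinate: "bdd_cont (\<lambda>y::config. g (y k) :: real)"
proof -
  have "continuous_on UNIV (\<lambda>y::config. g (y k))"
    by (rule continuous_on_compose2[OF Topological_Spaces.continuous_on_discrete[of UNIV g]]) auto
  moreover have "range (\<lambda>y::config. g (y k)) \<subseteq> {g True, g False}"
  proof (rule image_subsetI)
    show "g (y k) \<in> {g True, g False}" for y :: config
      by (cases "y k") auto
  qed
  ultimately show ?thesis
    unfolding bdd_cont_def by (metis bounded_subset finite.emptyI finite.insertI finite_imp_bounded)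
qed

lemma continuous_on_config_prefixE:
  fixes f :: "config \<Rightarrow> real"
  assumes "continuous_on UNIV f" "e > 0"
  obtains m where "\<And>y. (\<forall>i<m. y i = x i) \<Longrightarrow> \<bar>f y - f x\<bar> < e"
proof -
  define U where "U = f -` {f x - e <..< f x + e}"
  have U: "open U" "x \<in> U"
    using assms by (auto simp: U_def intro: open_vimage)
  have "openin (product_topology (\<lambda>_. euclidean) UNIV) U"
    using U(1) by (simp add: open_fun_def)
  from product_topology_open_contains_basis[OF this U(2)]
  obtain X where X: "x \<in> (\<Pi>\<^sub>E i\<in>UNIV. X i)" "finite {i. X i \<noteq> UNIV}" "(\<Pi>\<^sub>E i\<in>UNIV. X i) \<subseteq> U"
    by auto
  obtain m where m: "{i. X i \<noteq> UNIV} \<subseteq> {..<m}"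
    using finite_nat_bounded[OF X(2)] by blast
  have "y \<in> U" if "\<forall>i<m. y i = x i" for y
  proof -
    have "y i \<in> X i" for i
    proof (cases "X i = UNIV")
      case False
      then have "y i = x i"
        using that m by auto
      then show ?thesis
        using X(1) by (auto simp: PiE_iff)
    qed simp
    then show ?thesis
      using X(3) by auto
  qed
  then show ?thesis
    using that by (auto simp: U_def abs_diff_less_iff)
qed

lemma (in prob_space) abs_expectation_diff_le:
  assumes f: "integrable M f" and A: "A \<in> events" and "0 \<le> e"
    and "\<And>x. x \<in> space M \<Longrightarrow> \<bar>f x - c\<bar> \<le> B"
    and "\<And>x. x \<in> space M - A \<Longrightarrow> \<bar>f x - c\<bar> \<le> e"
  shows "\<bar>expectation f - c\<bar> \<le> e + B * prob A"
proof -
  have bound: "integrable M (\<lambda>x. e + B * indicator A x)"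
    using A by (intro Bochner_Integration.integrable_add integrable_mult_right integrable_real_indicator)
      (auto simp: less_top[symmetric])
  have "\<bar>expectation f - c\<bar> = \<bar>expectation (\<lambda>x. f x - c)\<bar>"
    using f by (simp add: prob_space)
  also have "\<dots> \<le> expectation (\<lambda>x. \<bar>f x - c\<bar>)"
    by (rule integral_abs_bound)
  also have "\<dots> \<le> expectation (\<lambda>x. e + B * indicator A x)"
  proof (rule integral_mono[OF _ bound])
    show "\<bar>f x - c\<bar> \<le> e + B * indicator A x" if "x \<in> space M" for x
      using assms(3) assms(4)[OF that] assms(5)[of x] that by (cases "x \<in> A") auto
  qed (use f in auto)
  also have "\<dots> = e + B * prob A"
    using A by (subst Bochner_Integration.integral_add)
      (auto simp: prob_space less_top[symmetric])
  finally show ?thesis .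
qed

lemma measure_nonzero_prefix_le:
  assumes "\<nu> \<in> laws"
  shows "measure \<nu> {y. \<exists>i<m. y i} \<le> (\<Sum>i<m. site_prob \<nu> i)"
proof -
  have "{y. \<exists>i<m. y i} = (\<Union>i<m. {y. y i})"
    by auto
  then show ?thesis
    using assms unfolding site_prob_def by (simp add: measure_UNION_le sets_law)
qed

text \<open>By continuity at \<^term>\<open>zero_config\<close>, \<open>f\<close> is close to its value there unless a one occurs
  among the first \<open>m\<close> sites, an event of probability at most \<open>m c n\<close>.\<close>

lemma weak_conv_delta0I:
  assumes laws: "\<And>n. \<nu> n \<in> laws" and le: "\<And>n k. site_prob (\<nu> n) k \<le> c n" and c: "c \<longlonglongrightarrow> 0"
  shows "weak_conv \<nu> delta0"
  unfolding weak_conv_def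
proof (intro allI impI)
  fix f assume f: "bdd_cont f"
  obtain B where B: "\<And>y. \<bar>f y\<bar> \<le> B"
    using bdd_cont_boundE[OF f] by blast
  have B2: "\<bar>f y - f zero_config\<bar> \<le> 2 * B" for y
    using B[of y] B[of zero_config] by linarith
  show "(\<lambda>n. \<integral>x. f x \<partial>\<nu> n) \<longlonglongrightarrow> (\<integral>x. f x \<partial>delta0)"
    unfolding integral_delta0[OF f] tendsto_iff dist_real_def
  proof (intro allI impI)
    fix e :: real assume "e > 0"
    obtain m where m: "\<And>y. (\<forall>i<m. \<not> y i) \<Longrightarrow> \<bar>f y - f zero_config\<bar> < e / 2"
      using f \<open>e > 0\<close> continuous_on_config_prefixE[of f "e / 2" zero_config]
      by (auto simp: bdd_cont_def)
    have "(\<lambda>n. e / 2 + 2 * B * (real m * c n)) \<longlonglongrightarrow> e / 2 + 2 * B * (real m * 0)"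
      by (intro tendsto_intros c)
    then have "eventually (\<lambda>n. e / 2 + 2 * B * (real m * c n) < e) sequentially"
      by (rule order_tendstoD(2)) (use \<open>e > 0\<close> in simp)
    then show "eventually (\<lambda>n. \<bar>(\<integral>x. f x \<partial>\<nu> n) - f zero_config\<bar> < e) sequentially"
    proof eventually_elim
      case (elim n)
      interpret prob_space "\<nu> n"
        using laws by (rule prob_space_law)
      have "\<bar>(\<integral>x. f x \<partial>\<nu> n) - f zero_config\<bar> \<le> e / 2 + 2 * B * prob {y. \<exists>i<m. y i}"
        using \<open>e > 0\<close> m B2 integrable_bdd_cont[OF f laws]
        by (intro abs_expectation_diff_le) (auto simp: sets_law[OF laws] abs_le_iff less_imp_le)
      also have "\<dots> \<le> e / 2 + 2 * B * (real m * c n)"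
        using measure_nonzero_prefix_le[OF laws, of n m] sum_mono[of "{..<m}" "site_prob (\<nu> n)" "\<lambda>_. c n"]
          le B[of zero_config]
        by (intro add_left_mono mult_left_mono) auto
      finally show ?case
        using elim by linarith
    qed
  qed
qed

lemma site_prob_tendsto_zero:
  assumes laws: "\<And>n. \<nu> n \<in> laws" and "weak_conv \<nu> delta0"
  shows "(\<lambda>n. site_prob (\<nu> n) 0) \<longlonglongrightarrow> 0"
proof -
  have "indicator {y. y 0} = (\<lambda>y::config. if y 0 then 1 else 0 :: real)"
    by (auto simp: indicator_def)
  then have "bdd_cont (indicator {y. y 0} :: config \<Rightarrow> real)"
    using bdd_cont_coordinate[of "\<lambda>b. if b then 1 else 0" 0] by simp
  from weak_convD[OF assms(2) this]
  have lim: "(\<lambda>n. \<integral>x. indicator {y. y 0} x \<partial>\<nu> n) \<longlonglongrightarrow> (\<integral>x. (indicator {y. y 0} x :: real) \<partial>delta0)" .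
  have "(\<integral>x. indicator {y. y 0} x \<partial>\<nu> n) = site_prob (\<nu> n) 0" for n
    using laws[of n] by (simp add: site_prob_def sets_law space_law)
  moreover have "(\<integral>x. (indicator {y. y 0} x :: real) \<partial>delta0) = 0"
    using integral_delta0[OF \<open>bdd_cont _\<close>] by simp
  ultimately show ?thesis
    using lim by (simp only:)
qed

lemma weak_conv_offset: "weak_conv (\<lambda>m. \<nu> (m + n)) \<mu> \<Longrightarrow> weak_conv \<nu> \<mu>"
  unfolding weak_conv_def by (auto intro: LIMSEQ_offset)

subsection \<open>Continuity of cylinder probabilities\<close>

definition prefix_word :: "config \<Rightarrow> nat \<Rightarrow> bool list" where
  "prefix_word y n = map y [0..<n]"

definition cylinder :: "bool list \<Rightarrow> config set" where
  "cylinder b = {y. prefix_word y (length b) = b}"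

lemma length_prefix_word [simp]: "length (prefix_word y n) = n"
  by (simp add: prefix_word_def)

lemma nth_prefix_word [simp]: "i < n \<Longrightarrow> prefix_word y n ! i = y i"
  by (simp add: prefix_word_def)

lemma mem_cylinder_iff: "y \<in> cylinder b \<longleftrightarrow> (\<forall>i<length b. y i = b ! i)"
  by (simp add: cylinder_def list_eq_iff_nth_eq)

lemma finite_bool_lists: "finite {b :: bool list. length b = n \<and> P b}"
  using finite_lists_length_eq[of "UNIV :: bool set" n] by (rule finite_subset[rotated]) auto

lemma finite_bool_list_pairs:
  "finite {(b :: bool list, c :: bool list). length b = n \<and> length c = n \<and> P b c}"
  by (rule finite_subset[OF _ finite_cartesian_product[OF finite_bool_lists[of n "\<lambda>_. True"]
        finite_bool_lists[of n "\<lambda>_. True"]]]) auto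

lemma sets_cylinder [measurable]: "cylinder b \<in> sets borel"
proof -
  have "Measurable.pred borel (\<lambda>y. y \<in> cylinder b)"
    unfolding mem_cylinder_iff by measurable
  then show ?thesis
    by (simp add: pred_def)
qed

lemma bdd_cont_indicator_cylinder: "bdd_cont (indicator (cylinder b) :: config \<Rightarrow> real)"
proof -
  have "indicator (cylinder b) = (\<lambda>y. \<Prod>i<length b. if y i = b ! i then 1 else 0 :: real)"
    by (auto simp: fun_eq_iff indicator_def mem_cylinder_iff)
  moreover have "continuous_on UNIV (\<lambda>y::config. \<Prod>i<length b. if y i = b ! i then 1 else 0 :: real)"
  proof (intro continuous_on_prod)
    fix i
    show "continuous_on UNIV (\<lambda>y::config. if y i = b ! i then 1 else 0 :: real)"
      using bdd_cont_coordinate[of "\<lambda>v. if v = b ! i then 1 else 0" i] by (simp add: bdd_cont_def)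
  qed
  ultimately have "continuous_on UNIV (indicator (cylinder b) :: config \<Rightarrow> real)"
    by simp
  moreover have "range (indicator (cylinder b) :: config \<Rightarrow> real) \<subseteq> {0, 1}"
    by (auto simp: indicator_def)
  ultimately show ?thesis
    unfolding bdd_cont_def by (metis bounded_subset finite.emptyI finite.insertI finite_imp_bounded)
qed

lemma measure_prefix_event:
  assumes "\<nu> \<in> laws"
  shows "measure \<nu> {y. P (prefix_word y n)} = (\<Sum>b | length b = n \<and> P b. measure \<nu> (cylinder b))"
proof -
  interpret prob_space \<nu>
    using assms by (rule prob_space_law)
  have "{y. P (prefix_word y n)} = (\<Union>b \<in> {b. length b = n \<and> P b}. cylinder b)"
    by (auto simp: cylinder_def)
  moreover have "disjoint_family_on cylinder {b. length b = n \<and> P b}"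
    by (auto simp: disjoint_family_on_def cylinder_def)
  ultimately show ?thesis
    using assms by (simp add: finite_measure_finite_Union finite_bool_lists sets_law image_subset_iff)
qed

lemma measure_pair_prefix_event:
  assumes "\<nu> \<in> laws"
  shows "measure (\<nu> \<Otimes>\<^sub>M \<nu>) {(y, z). P (prefix_word y n) (prefix_word z n)} =
    (\<Sum>(b, c) | length b = n \<and> length c = n \<and> P b c. measure \<nu> (cylinder b) * measure \<nu> (cylinder c))"
proof -
  let ?T = "{(b, c). length b = n \<and> length c = n \<and> P b c}"
  interpret prob_space \<nu>
    using assms by (rule prob_space_law)
  interpret P: prob_space "\<nu> \<Otimes>\<^sub>M \<nu>"
    by (intro prob_space_pair prob_space_axioms)
  have "{(y, z). P (prefix_word y n) (prefix_word z n)} = (\<Union>(b, c) \<in> ?T. cylinder b \<times> cylinder c)"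
    by (auto simp: cylinder_def) (metis length_prefix_word)
  moreover have "disjoint_family_on (\<lambda>(b, c). cylinder b \<times> cylinder c) ?T"
    by (auto simp: disjoint_family_on_def cylinder_def)
  ultimately show ?thesis
    using assms finite_bool_list_pairs[of n P]
    by (simp add: P.finite_measure_finite_Union image_subset_iff sets_law measure_pair_measure_Times
        finite_measure_axioms case_prod_unfold)
qed

lemma topspace_weak_topology: "topspace weak_topology = laws"
proof -
  have "laws \<in> {{\<mu> \<in> laws. (\<integral>x. f x \<partial>\<mu>) \<in> U} | f U. bdd_cont f \<and> open U}"
    by (intro CollectI exI[of _ "\<lambda>_. 0"] exI[of _ UNIV]) (auto simp: bdd_cont_def)
  then show ?thesis
    unfolding weak_topology_def topology_generated_by_topspace by blast
qed

lemma continuous_map_integral: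
  assumes "bdd_cont f"
  shows "continuous_map weak_topology euclideanreal (\<lambda>\<mu>. \<integral>x. f x \<partial>\<mu>)"
  unfolding continuous_map_def topspace_weak_topology
proof (intro conjI allI impI)
  fix U :: "real set"
  assume "openin euclideanreal U"
  then show "openin weak_topology {\<mu> \<in> laws. (\<integral>x. f x \<partial>\<mu>) \<in> U}"
    using assms unfolding weak_topology_def by (intro topology_generated_by_Basis) auto
qed auto

definition cylinder_continuous :: "(config measure \<Rightarrow> config measure) \<Rightarrow> bool" where
  "cylinder_continuous H \<longleftrightarrow> (\<forall>\<mu>\<in>laws. H \<mu> \<in> laws) \<and>
     (\<forall>b. continuous_map weak_topology euclideanreal (\<lambda>\<mu>. measure (H \<mu>) (cylinder b)))"

lemma cylinder_continuous_id: "cylinder_continuous id"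
  unfolding cylinder_continuous_def
proof (intro conjI allI ballI)
  fix b
  show "continuous_map weak_topology euclideanreal (\<lambda>\<mu>. measure (id \<mu>) (cylinder b))"
  proof (rule continuous_map_eq[OF continuous_map_integral[OF bdd_cont_indicator_cylinder]])
    show "(\<integral>x. indicator (cylinder b) x \<partial>\<mu>) = measure (id \<mu>) (cylinder b)"
      if "\<mu> \<in> topspace weak_topology" for \<mu>
      using that by (simp add: topspace_weak_topology sets_law prob_space_law)
  qed
qed simp

lemma continuous_map_measure_prefix_event:
  assumes "cylinder_continuous H"
  shows "continuous_map weak_topology euclideanreal (\<lambda>\<mu>. measure (H \<mu>) {y. P (prefix_word y n)})"
proof (rule continuous_map_eq)
  show "continuous_map weak_topology euclideanreal
      (\<lambda>\<mu>. \<Sum>b | length b = n \<and> P b. measure (H \<mu>) (cylinder b))"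
    using assms finite_bool_lists by (intro continuous_map_sum) (auto simp: cylinder_continuous_def)
  show "(\<Sum>b | length b = n \<and> P b. measure (H \<mu>) (cylinder b)) = measure (H \<mu>) {y. P (prefix_word y n)}"
    if "\<mu> \<in> topspace weak_topology" for \<mu>
    using that assms by (simp add: measure_prefix_event topspace_weak_topology cylinder_continuous_def)
qed

lemma continuous_map_measure_pair_prefix_event:
  assumes "cylinder_continuous H"
  shows "continuous_map weak_topology euclideanreal
    (\<lambda>\<mu>. measure (H \<mu> \<Otimes>\<^sub>M H \<mu>) {(y, z). P (prefix_word y n) (prefix_word z n)})"
proof (rule continuous_map_eq)
  show "continuous_map weak_topology euclideanreal (\<lambda>\<mu>.
      \<Sum>(b, c) | length b = n \<and> length c = n \<and> P b c. measure (H \<mu>) (cylinder b) * measure (H \<mu>) (cylinder c))"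
    using assms finite_bool_list_pairs[of n P]
    by (intro continuous_map_sum)
      (auto intro!: continuous_map_real_mult simp: cylinder_continuous_def case_prod_unfold)
  show "(\<Sum>(b, c) | length b = n \<and> length c = n \<and> P b c. measure (H \<mu>) (cylinder b) * measure (H \<mu>) (cylinder c))
      = measure (H \<mu> \<Otimes>\<^sub>M H \<mu>) {(y, z). P (prefix_word y n) (prefix_word z n)}"
    if "\<mu> \<in> topspace weak_topology" for \<mu>
    using that assms by (simp add: measure_pair_prefix_event topspace_weak_topology cylinder_continuous_def)
qed

lemma cylinder_continuous_F_b:
  assumes "cylinder_continuous H"
  shows "cylinder_continuous (F_b \<circ> H)"
  unfolding cylinder_continuous_def
proof (intro conjI allI ballI)
  show "(F_b \<circ> H) \<mu> \<in> laws" if "\<mu> \<in> laws" for \<mu>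
    using that assms by (simp add: F_b_law cylinder_continuous_def)
  fix a
  let ?P = "\<lambda>w. \<forall>i<length a. (w ! i \<or> w ! Suc i) = a ! i"
  have preimage: "Phi_b -` cylinder a = {y. ?P (prefix_word y (Suc (length a)))}"
    by (simp add: set_eq_iff mem_cylinder_iff Phi_b_def)
  show "continuous_map weak_topology euclideanreal (\<lambda>\<mu>. measure ((F_b \<circ> H) \<mu>) (cylinder a))"
  proof (rule continuous_map_eq[OF continuous_map_measure_prefix_event[OF assms]])
    show "measure (H \<mu>) {y. ?P (prefix_word y (Suc (length a)))} = measure ((F_b \<circ> H) \<mu>) (cylinder a)"
      if "\<mu> \<in> topspace weak_topology" for \<mu>
      using that assms by (simp add: measure_F_b preimage topspace_weak_topology cylinder_continuous_def)
  qed
qed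

lemma cylinder_continuous_F_A:
  assumes "cylinder_continuous H"
  shows "cylinder_continuous (F_A \<circ> H)"
  unfolding cylinder_continuous_def
proof (intro conjI allI ballI)
  show "(F_A \<circ> H) \<mu> \<in> laws" if "\<mu> \<in> laws" for \<mu>
    using that assms by (simp add: F_A_law cylinder_continuous_def)
  fix a
  let ?P = "\<lambda>b c. \<forall>i<length a. (b ! i \<and> c ! i) = a ! i"
  have preimage: "(\<lambda>(y, z). Phi_A y z) -` cylinder a =
      {(y, z). ?P (prefix_word y (length a)) (prefix_word z (length a))}"
    by (simp add: set_eq_iff mem_cylinder_iff Phi_A_def)
  show "continuous_map weak_topology euclideanreal (\<lambda>\<mu>. measure ((F_A \<circ> H) \<mu>) (cylinder a))"
  proof (rule continuous_map_eq[OF continuous_map_measure_pair_prefix_event[OF assms]])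
    show "measure (H \<mu> \<Otimes>\<^sub>M H \<mu>) {(y, z). ?P (prefix_word y (length a)) (prefix_word z (length a))}
        = measure ((F_A \<circ> H) \<mu>) (cylinder a)"
      if "\<mu> \<in> topspace weak_topology" for \<mu>
      using that assms by (simp add: measure_F_A preimage topspace_weak_topology cylinder_continuous_def)
  qed
qed

subsection \<open>Mixtures with the all-zero configuration\<close>

text \<open>The mixture \<open>p \<mu> + (1 - p) \<delta>\<^sub>0\<close>.\<close>

definition zero_mixture :: "real \<Rightarrow> config measure \<Rightarrow> config measure" where
  "zero_mixture p \<mu> =
     distr (measure_pmf (bernoulli_pmf p) \<Otimes>\<^sub>M \<mu>) borel (\<lambda>(b, y). if b then y else zero_config)"

lemma measurable_zero_mixture:
  assumes "\<mu> \<in> laws"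
  shows "(\<lambda>(b, y). if b then y else zero_config) \<in> measurable (measure_pmf q \<Otimes>\<^sub>M \<mu>) borel"
proof -
  have "(\<lambda>(b, y). if b then y else zero_config) \<in> measurable (count_space UNIV \<Otimes>\<^sub>M borel) borel"
  proof (rule measurable_pair_measure_countable1)
    show "(\<lambda>y. (\<lambda>(b, y). if b then y else zero_config) (b, y)) \<in> borel_measurable borel" for b
      by (cases b) simp_all
  qed simp
  moreover have "sets (measure_pmf q \<Otimes>\<^sub>M \<mu>) = sets (count_space UNIV \<Otimes>\<^sub>M (borel :: config measure))"
    using assms by (intro sets_pair_measure_cong) (auto simp: sets_law)
  ultimately show ?thesis
    using measurable_cong_sets[OF _ refl] by blast
qed

lemma prob_space_bernoulli_pair:
  "\<mu> \<in> laws \<Longrightarrow> prob_space (measure_pmf (bernoulli_pmf p) \<Otimes>\<^sub>M \<mu>)"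
  by (intro prob_space_pair prob_space_measure_pmf prob_space_law)

lemma zero_mixture_law: "\<mu> \<in> laws \<Longrightarrow> zero_mixture p \<mu> \<in> laws"
  unfolding zero_mixture_def
  by (intro distr_law prob_space_bernoulli_pair measurable_zero_mixture)

lemma zero_mixture_stationary:
  assumes "\<mu> \<in> stationary_laws"
  shows "zero_mixture p \<mu> \<in> stationary_laws"
proof -
  let ?B = "measure_pmf (bernoulli_pmf p)"
  note L = stationary_lawD[OF assms]
  have sets: "sets (?B \<Otimes>\<^sub>M \<mu>) = sets (?B \<Otimes>\<^sub>M borel)"
    using L by (intro sets_pair_measure_cong) (auto simp: sets_law)
  show ?thesis
    unfolding zero_mixture_def
  proof (rule distr_stationary[where h = "\<lambda>(b, y). (b, shift y)"])
    show "(\<lambda>(b, y). (b, shift y)) \<in> measurable (?B \<Otimes>\<^sub>M \<mu>) (?B \<Otimes>\<^sub>M \<mu>)"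
      by (simp add: measurable_cong_sets[OF sets sets])
    show "distr (?B \<Otimes>\<^sub>M \<mu>) (?B \<Otimes>\<^sub>M \<mu>) (\<lambda>(b, y). (b, shift y)) = ?B \<Otimes>\<^sub>M \<mu>"
      using pair_measure_shift_invariant[where M = ?B and f = "\<lambda>b. b" and \<mu> = \<mu>] assms
      by (simp add: distr_id)
  qed (auto simp: prob_space_bernoulli_pair L measurable_zero_mixture shift_def)
qed

lemma nonzero_prob_zero_mixture_le:
  assumes "\<mu> \<in> laws" "0 \<le> p" "p \<le> 1"
  shows "nonzero_prob (zero_mixture p \<mu>) \<le> p"
proof -
  let ?B = "measure_pmf (bernoulli_pmf p)"
  interpret M: prob_space \<mu>
    using assms(1) by (rule prob_space_law)
  interpret P: prob_space "?B \<Otimes>\<^sub>M \<mu>"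
    using assms(1) by (rule prob_space_bernoulli_pair)
  have "nonzero_prob (zero_mixture p \<mu>) =
      measure (?B \<Otimes>\<^sub>M \<mu>) ((\<lambda>(b, y). if b then y else zero_config) -` {y. \<exists>k. y k})"
    unfolding nonzero_prob_def zero_mixture_def using assms(1)
    by (subst measure_distr) (auto simp: measurable_zero_mixture space_pair_measure space_law)
  also have "\<dots> \<le> measure (?B \<Otimes>\<^sub>M \<mu>) ({True} \<times> space \<mu>)"
  proof (rule P.finite_measure_mono)
    show "(\<lambda>(b, y). if b then y else zero_config) -` {y. \<exists>k. y k} \<subseteq> {True} \<times> space \<mu>"
      using assms(1) by (auto simp: space_law split: if_split_asm)
    show "{True} \<times> space \<mu> \<in> P.events"
      by (intro pair_measureI) auto
  qed
  also have "\<dots> = p"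
    using assms by (simp add: measure_pair_measure_Times M.prob_space measure_pmf.finite_measure_axioms
        M.finite_measure_axioms measure_pmf_single)
  finally show ?thesis .
qed

lemma integral_zero_mixture:
  assumes "\<mu> \<in> laws" "bdd_cont f" "0 \<le> p" "p \<le> 1"
  shows "(\<integral>x. f x \<partial>zero_mixture p \<mu>) = p * (\<integral>x. f x \<partial>\<mu>) + (1 - p) * f zero_config"
proof -
  let ?B = "measure_pmf (bernoulli_pmf p)" and ?g = "\<lambda>(b, y). if b then y else zero_config"
  interpret M: prob_space \<mu>
    using assms(1) by (rule prob_space_law)
  interpret P: pair_prob_space ?B \<mu>
    by (simp add: pair_prob_space_def pair_sigma_finite_def M.prob_space_axioms
        M.sigma_finite_measure_axioms prob_space_measure_pmf prob_space_imp_sigma_finite)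
  obtain B where "\<And>y. \<bar>f y\<bar> \<le> B"
    using bdd_cont_boundE[OF assms(2)] by blast
  moreover have "(\<lambda>x. f (?g x)) \<in> borel_measurable (?B \<Otimes>\<^sub>M \<mu>)"
    using measurable_zero_mixture[OF assms(1)] bdd_cont_borel_measurable[OF assms(2)]
    by (rule measurable_compose)
  ultimately have integrable: "integrable (?B \<Otimes>\<^sub>M \<mu>) (\<lambda>x. f (?g x))"
    by (intro P.P.integrable_const_bound[where B = B]) auto
  have "(\<integral>x. f x \<partial>zero_mixture p \<mu>) = (\<integral>x. f (?g x) \<partial>(?B \<Otimes>\<^sub>M \<mu>))"
    unfolding zero_mixture_def using assms(1,2)
    by (intro integral_distr measurable_zero_mixture bdd_cont_borel_measurable)
  also have "\<dots> = (\<integral>b. (\<integral>y. f (?g (b, y)) \<partial>\<mu>) \<partial>?B)"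
    by (rule P.integral_fst'[OF integrable, symmetric])
  also have "\<dots> = p * (\<integral>x. f x \<partial>\<mu>) + (1 - p) * f zero_config"
    using assms(3,4) by (simp add: M.prob_space)
  finally show ?thesis .
qed

lemma weak_conv_zero_mixture:
  assumes "\<mu> \<in> laws" "p \<longlonglongrightarrow> 1" "\<And>j. 0 \<le> p j" "\<And>j. p j \<le> 1"
  shows "weak_conv (\<lambda>j. zero_mixture (p j) \<mu>) \<mu>"
  unfolding weak_conv_def
proof (intro allI impI)
  fix f assume f: "bdd_cont f"
  have "(\<lambda>j. p j * (\<integral>x. f x \<partial>\<mu>) + (1 - p j) * f zero_config) \<longlonglongrightarrow>
      1 * (\<integral>x. f x \<partial>\<mu>) + (1 - 1) * f zero_config"
    by (intro tendsto_intros assms(2))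
  then show "(\<lambda>j. \<integral>x. f x \<partial>zero_mixture (p j) \<mu>) \<longlonglongrightarrow> (\<integral>x. f x \<partial>\<mu>)"
    using assms by (simp add: integral_zero_mixture f)
qed

lemma weak_conv_eventually_in:
  assumes laws: "\<And>n. \<nu> n \<in> laws" and conv: "weak_conv \<nu> \<mu>"
    and W: "openin weak_topology W" "\<mu> \<in> W"
  shows "eventually (\<lambda>n. \<nu> n \<in> W) sequentially"
proof -
  have "generate_topology_on {{\<mu> \<in> laws. (\<integral>x. f x \<partial>\<mu>) \<in> U} | f U. bdd_cont f \<and> open U} W"
    using W(1) unfolding weak_topology_def by (rule openin_topology_generated_by)
  then show ?thesis
    using W(2)
  proof (induction rule: generate_topology_on.induct)
    case (Int a b)
    then show ?case
      by (auto intro: eventually_conj)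
  next
    case (UN K)
    then obtain k where "k \<in> K" "\<mu> \<in> k"
      by blast
    with UN.IH[OF this] show ?case
      by (auto elim: eventually_mono)
  next
    case (Basis s)
    then obtain f U where s: "s = {\<mu> \<in> laws. (\<integral>x. f x \<partial>\<mu>) \<in> U}" and "bdd_cont f" "open U"
      by blast
    then have "eventually (\<lambda>n. (\<integral>x. f x \<partial>\<nu> n) \<in> U) sequentially"
      using Basis.prems by (intro topological_tendstoD[OF weak_convD[OF conv]]) auto
    then show ?case
      using laws by (auto simp: s elim: eventually_mono)
  qed simp
qed

lemma in_closure_of_stationary_laws:
  assumes "\<mu> \<in> stationary_laws" "D \<subseteq> stationary_laws" "\<And>n. \<nu> n \<in> D" "weak_conv \<nu> \<mu>"
  shows "\<mu> \<in> subtopology weak_topology stationary_laws closure_of D"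
  unfolding in_closure_of
proof (intro conjI allI impI)
  show "\<mu> \<in> topspace (subtopology weak_topology stationary_laws)"
    using assms(1) by (auto simp: topspace_weak_topology stationary_laws_def)
  fix T
  assume "\<mu> \<in> T \<and> openin (subtopology weak_topology stationary_laws) T"
  then obtain W where W: "openin weak_topology W" "\<mu> \<in> W" "T = W \<inter> stationary_laws"
    by (auto simp: openin_subtopology)
  have "eventually (\<lambda>n. \<nu> n \<in> W) sequentially"
    using assms(2-4) W by (intro weak_conv_eventually_in) (auto simp: stationary_laws_def)
  then obtain n where "\<nu> n \<in> W"
    by (metis eventually_sequentially order_refl)
  then show "\<exists>y. y \<in> D \<and> y \<in> T"
    using assms(2,3) W(3) by blast
qed

subsection \<open>Quadratically contracting column maps\<close>

definition attracted_to_zero :: "(config measure \<Rightarrow> config measure) \<Rightarrow> config measure set" where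
  "attracted_to_zero G = {\<mu> \<in> stationary_laws. weak_conv (\<lambda>n. (G ^^ n) \<mu>) delta0}"

locale quadratic_column_map =
  fixes G :: "config measure \<Rightarrow> config measure"
  assumes law: "\<rho> \<in> laws \<Longrightarrow> G \<rho> \<in> laws"
    and stationary: "\<rho> \<in> stationary_laws \<Longrightarrow> G \<rho> \<in> stationary_laws"
    and site_prob_le: "\<rho> \<in> laws \<Longrightarrow> (\<And>k. site_prob \<rho> k \<le> s) \<Longrightarrow> site_prob (G \<rho>) j \<le> 4 * s\<^sup>2"
    and nonzero_prob_le: "\<rho> \<in> laws \<Longrightarrow> nonzero_prob (G \<rho>) \<le> (nonzero_prob \<rho>)\<^sup>2"
    and cylinder_continuous_comp: "cylinder_continuous H \<Longrightarrow> cylinder_continuous (G \<circ> H)"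
begin

lemma funpow_law: "\<rho> \<in> laws \<Longrightarrow> (G ^^ n) \<rho> \<in> laws"
  by (induction n) (simp_all add: law)

lemma funpow_stationary: "\<rho> \<in> stationary_laws \<Longrightarrow> (G ^^ n) \<rho> \<in> stationary_laws"
  by (induction n) (simp_all add: stationary)

lemma site_prob_funpow_le:
  assumes "\<nu> \<in> laws" "\<And>k. site_prob \<nu> k \<le> r" "r \<le> 1/4"
  shows "site_prob ((G ^^ m) \<nu>) j \<le> r * (4 * r) ^ m"
proof (induction m arbitrary: j)
  case 0
  then show ?case
    using assms(2) by simp
next
  case (Suc m)
  have r: "0 \<le> r"
    using site_prob_nonneg assms(2) order_trans by blast
  have "site_prob ((G ^^ Suc m) \<nu>) j \<le> 4 * (r * (4 * r) ^ m)\<^sup>2"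
    using Suc.IH by (simp add: site_prob_le funpow_law assms(1))
  also have "\<dots> = r * (4 * r) ^ Suc m * (4 * r) ^ m"
    by (simp add: power2_eq_square algebra_simps)
  also have "\<dots> \<le> r * (4 * r) ^ Suc m"
    using r assms(3) by (intro mult_left_le power_le_one mult_nonneg_nonneg zero_le_power) auto
  finally show ?case .
qed

lemma weak_conv_if_site_prob_lt:
  assumes "\<nu> \<in> stationary_laws" "site_prob \<nu> 0 < 1/4"
  shows "weak_conv (\<lambda>m. (G ^^ m) \<nu>) delta0"
proof (rule weak_conv_delta0I)
  let ?r = "site_prob \<nu> 0"
  note L = stationary_lawD[OF assms(1)]
  show "(G ^^ m) \<nu> \<in> laws" for m
    using L by (rule funpow_law)
  have "site_prob \<nu> k \<le> ?r" for k
    using site_prob_stationary[OF assms(1), of k] by simp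
  then show "site_prob ((G ^^ m) \<nu>) k \<le> ?r * (4 * ?r) ^ m" for m k
    using assms(2) by (intro site_prob_funpow_le L) auto
  show "(\<lambda>m. ?r * (4 * ?r) ^ m) \<longlonglongrightarrow> 0"
    using assms(2) site_prob_nonneg[of \<nu> 0] by (intro tendsto_mult_right_zero LIMSEQ_power_zero) auto
qed

lemma nonzero_prob_funpow_le: "\<nu> \<in> laws \<Longrightarrow> nonzero_prob ((G ^^ m) \<nu>) \<le> nonzero_prob \<nu> ^ 2 ^ m"
proof (induction m)
  case (Suc m)
  have "nonzero_prob ((G ^^ Suc m) \<nu>) \<le> (nonzero_prob ((G ^^ m) \<nu>))\<^sup>2"
    using nonzero_prob_le funpow_law Suc.prems by simp
  also have "\<dots> \<le> (nonzero_prob \<nu> ^ 2 ^ m)\<^sup>2"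
    using Suc by (intro power_mono nonzero_prob_nonneg) auto
  also have "\<dots> = nonzero_prob \<nu> ^ 2 ^ Suc m"
    by (simp add: power_mult[symmetric] mult.commute)
  finally show ?case .
qed simp

lemma weak_conv_if_nonzero_prob_lt:
  assumes "\<nu> \<in> laws" "nonzero_prob \<nu> < 1"
  shows "weak_conv (\<lambda>m. (G ^^ m) \<nu>) delta0"
proof (rule weak_conv_delta0I)
  let ?q = "nonzero_prob \<nu>"
  show "(G ^^ m) \<nu> \<in> laws" for m
    using assms(1) by (rule funpow_law)
  show "site_prob ((G ^^ m) \<nu>) k \<le> ?q ^ m" for m k
  proof -
    have "site_prob ((G ^^ m) \<nu>) k \<le> ?q ^ 2 ^ m"
      using site_prob_le_nonzero_prob[OF funpow_law] nonzero_prob_funpow_le assms(1) order_trans by blast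
    also have "\<dots> \<le> ?q ^ m"
      using assms(2) nonzero_prob_nonneg[of \<nu>] by (intro power_decreasing less_imp_le[OF less_exp]) auto
    finally show ?thesis .
  qed
  show "(\<lambda>m. ?q ^ m) \<longlonglongrightarrow> 0"
    using assms(2) nonzero_prob_nonneg[of \<nu>] by (intro LIMSEQ_power_zero) auto
qed

lemma attracted_to_zero_iff:
  assumes "\<mu> \<in> stationary_laws"
  shows "\<mu> \<in> attracted_to_zero G \<longleftrightarrow> (\<exists>n. site_prob ((G ^^ n) \<mu>) 0 < 1/4)"
proof
  assume "\<mu> \<in> attracted_to_zero G"
  then have conv: "weak_conv (\<lambda>n. (G ^^ n) \<mu>) delta0"
    by (simp add: attracted_to_zero_def)
  note L = stationary_lawD[OF assms]
  have "(\<lambda>n. site_prob ((G ^^ n) \<mu>) 0) \<longlonglongrightarrow> 0"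
    using funpow_law[OF L] conv by (rule site_prob_tendsto_zero)
  then have "eventually (\<lambda>n. site_prob ((G ^^ n) \<mu>) 0 < 1/4) sequentially"
    by (rule order_tendstoD(2)) simp
  then show "\<exists>n. site_prob ((G ^^ n) \<mu>) 0 < 1/4"
    unfolding eventually_sequentially by blast
next
  assume "\<exists>n. site_prob ((G ^^ n) \<mu>) 0 < 1/4"
  then obtain n where "site_prob ((G ^^ n) \<mu>) 0 < 1/4"
    by blast
  then have "weak_conv (\<lambda>m. (G ^^ m) ((G ^^ n) \<mu>)) delta0"
    by (intro weak_conv_if_site_prob_lt funpow_stationary assms)
  then have "weak_conv (\<lambda>m. (G ^^ (m + n)) \<mu>) delta0"
    by (simp add: funpow_add)
  then show "\<mu> \<in> attracted_to_zero G"
    using assms weak_conv_offset by (simp add: attracted_to_zero_def)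
qed

lemma cylinder_continuous_funpow: "cylinder_continuous (G ^^ n)"
  by (induction n) (simp_all only: funpow.simps cylinder_continuous_id cylinder_continuous_comp)

lemma openin_attracted_to_zero:
  "openin (subtopology weak_topology stationary_laws) (attracted_to_zero G)"
  unfolding openin_subtopology
proof (intro exI conjI)
  let ?U = "\<Union>n. {\<mu> \<in> topspace weak_topology. measure ((G ^^ n) \<mu>) (cylinder [True]) \<in> {..<1/4}}"
  have "openin weak_topology {\<mu> \<in> topspace weak_topology. measure ((G ^^ n) \<mu>) (cylinder [True]) \<in> {..<1/4}}"
    for n
    using cylinder_continuous_funpow[of n] unfolding cylinder_continuous_def
    by (intro openin_continuous_map_preimage) auto
  then show "openin weak_topology ?U"
    by (intro openin_Union) blast
  have site: "measure \<nu> (cylinder [True]) = site_prob \<nu> 0" for \<nu>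
    by (simp add: site_prob_def cylinder_def prefix_word_def)
  show "attracted_to_zero G = ?U \<inter> stationary_laws"
  proof (intro set_eqI)
    fix \<mu>
    show "\<mu> \<in> attracted_to_zero G \<longleftrightarrow> \<mu> \<in> ?U \<inter> stationary_laws"
    proof (cases "\<mu> \<in> stationary_laws")
      case True
      then show ?thesis
        using attracted_to_zero_iff[OF True]
        by (simp add: site topspace_weak_topology stationary_laws_def)
    qed (simp add: attracted_to_zero_def)
  qed
qed

lemma zero_mixture_attracted_to_zero:
  assumes "\<mu> \<in> stationary_laws" "0 \<le> p" "p < 1"
  shows "zero_mixture p \<mu> \<in> attracted_to_zero G"
proof -
  note L = stationary_lawD[OF assms(1)]
  have "nonzero_prob (zero_mixture p \<mu>) < 1"
    using nonzero_prob_zero_mixture_le[OF L assms(2)] assms(3) by linarith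
  then show ?thesis
    unfolding attracted_to_zero_def
    using assms(1) by (auto intro: zero_mixture_stationary weak_conv_if_nonzero_prob_lt zero_mixture_law L)
qed

lemma closure_of_attracted_to_zero:
  "subtopology weak_topology stationary_laws closure_of attracted_to_zero G = stationary_laws"
proof
  show "subtopology weak_topology stationary_laws closure_of attracted_to_zero G \<subseteq> stationary_laws"
    using closure_of_subset_topspace by fastforce
  show "stationary_laws \<subseteq> subtopology weak_topology stationary_laws closure_of attracted_to_zero G"
  proof
    fix \<mu>
    assume \<mu>: "\<mu> \<in> stationary_laws"
    define p where "p j = 1 - inverse (real (Suc j))" for j
    have p: "0 \<le> p j" "p j < 1" for j
      by (auto simp: p_def field_simps)
    have "p \<longlonglongrightarrow> 1 - 0"
      unfolding p_def[abs_def] by (intro tendsto_diff tendsto_const LIMSEQ_inverse_real_of_nat)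
    then have conv: "weak_conv (\<lambda>j. zero_mixture (p j) \<mu>) \<mu>"
      using p by (intro weak_conv_zero_mixture stationary_lawD[OF \<mu>]) (auto intro: less_imp_le)
    have mix: "zero_mixture (p j) \<mu> \<in> attracted_to_zero G" for j
      using \<mu> p(1) p(2) by (rule zero_mixture_attracted_to_zero)
    show "\<mu> \<in> subtopology weak_topology stationary_laws closure_of attracted_to_zero G"
      by (rule in_closure_of_stationary_laws[OF \<mu> _ mix conv]) (auto simp: attracted_to_zero_def)
  qed
qed

end

interpretation F: quadratic_column_map F
proof
  show "cylinder_continuous (F \<circ> H)" if "cylinder_continuous H" for H
    using that by (simp add: F_def comp_assoc cylinder_continuous_F_A cylinder_continuous_F_b)
qed (simp_all add: F_law F_stationary site_prob_F_le nonzero_prob_F_le)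

interpretation F_hat: quadratic_column_map F_hat
proof
  show "cylinder_continuous (F_hat \<circ> H)" if "cylinder_continuous H" for H
    using that by (simp add: F_hat_def comp_assoc cylinder_continuous_F_A cylinder_continuous_F_b)
qed (simp_all add: F_hat_law F_hat_stationary site_prob_F_hat_le nonzero_prob_F_hat_le)

theorem proposition19:
  shows "openin (subtopology weak_topology stationary_laws) D0 \<and>
         (subtopology weak_topology stationary_laws) closure_of D0 = stationary_laws \<and>
         openin (subtopology weak_topology stationary_laws) D0_hat \<and>
         (subtopology weak_topology stationary_laws) closure_of D0_hat = stationary_laws"
proof -
  have "D0 = attracted_to_zero F" "D0_hat = attracted_to_zero F_hat"
    by (simp_all add: D0_def D0_hat_def attracted_to_zero_def)
  then show ?thesis
    using F.openin_attracted_to_zero F.closure_of_attracted_to_zero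
      F_hat.openin_attracted_to_zero F_hat.closure_of_attracted_to_zero
    by simp
qed

end
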